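(* For $n\ge 2$ let $s_n$ be the number of symmetry classes of bi-vincular patterns of length $n$. Writing $n=4m+r$ with $r\in\{0,1,2,3\}$, we have \begin{align*} s_{4m}&=2^{6m-1}(2m)!+2^{8m-1}(4m)!+2^{4m-1}I(4m)+2^{2m}\frac{(2m-1)!}{(m-1)!},\\ s_{4m+1}&=2^{6m-1}(2m)!+2^{8m+1}(4m+1)!+2^{4m}I(4m+1)+2^{2m}\frac{(2m-1)!}{(m-1)!},\\ s_{4m+2}&=2^{6m+2}(2m+1)!+2^{8m+3}(4m+2)!+2^{4m+1}I(4m+2),\\ s_{4m+3}&=2^{6m+2}(2m+1)!+2^{8m+5}(4m+3)!+2^{4m+2}I(4m+3), \end{align*} where $I(n)=\sum_{k=0}^{\lfloor n/2\rfloor}\frac{n!}{k!\,(n-2k)!\,2^k}$ is the number of involutions of $[n]$.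
   Context: A bi-vincular pattern of length $k$ is a triple $p=(\sigma,X,Y)$ with $\sigma$ a permutation of $[k]=\{1,\dots,k\}$ and $X,Y\subseteq\{0,1,\dots,k\}$; there are $4^{k+1}k!$ of them. For such $p$ define $p^{i}=(\sigma^{-1},Y,X)$, $p^{r}=(\sigma^{r},\{k-x:x\in X\},Y)$, $p^{c}=(\sigma^{c},X,\{k-y:y\in Y\})$, where $\sigma^{-1}$ is the inverse permutation, $\sigma^r_j=\sigma_{k+1-j}$ and $\sigma^c_j=k+1-\sigma_j$. Two patterns are in the same symmetry class if one is obtained from the other by applying a finite sequence of the maps $p\mapsto p^i,p^r,p^c$. *)

theory Defs
  imports "HOL-Combinatorics.Permutations"
begin

type_synonym bvpat = "(nat \<Rightarrow> nat) \<times> nat set \<times> nat set"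

definition bvpats :: "nat \<Rightarrow> bvpat set" where
  "bvpats k = {(\<sigma>, X, Y). \<sigma> permutes {1..k} \<and> X \<subseteq> {0..k} \<and> Y \<subseteq> {0..k}}"

definition rev_perm :: "nat \<Rightarrow> (nat \<Rightarrow> nat) \<Rightarrow> nat \<Rightarrow> nat" where
  "rev_perm k \<sigma> j = (if j \<in> {1..k} then \<sigma> (k + 1 - j) else j)"

definition comp_perm :: "nat \<Rightarrow> (nat \<Rightarrow> nat) \<Rightarrow> nat \<Rightarrow> nat" where
  "comp_perm k \<sigma> j = (if j \<in> {1..k} then k + 1 - \<sigma> j else j)"

definition pat_i :: "nat \<Rightarrow> bvpat \<Rightarrow> bvpat" where
  "pat_i k p = (case p of (\<sigma>, X, Y) \<Rightarrow> (inv \<sigma>, Y, X))"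

definition pat_r :: "nat \<Rightarrow> bvpat \<Rightarrow> bvpat" where
  "pat_r k p = (case p of (\<sigma>, X, Y) \<Rightarrow> (rev_perm k \<sigma>, (\<lambda>x. k - x) ` X, Y))"

definition pat_c :: "nat \<Rightarrow> bvpat \<Rightarrow> bvpat" where
  "pat_c k p = (case p of (\<sigma>, X, Y) \<Rightarrow> (comp_perm k \<sigma>, X, (\<lambda>y. k - y) ` Y))"

definition sym_step :: "nat \<Rightarrow> bvpat rel" where
  "sym_step k = {(p, q). q = pat_i k p \<or> q = pat_r k p \<or> q = pat_c k p}"

definition sym_class :: "nat \<Rightarrow> bvpat \<Rightarrow> bvpat set" where
  "sym_class k p = {q. (p, q) \<in> (sym_step k)\<^sup>*}"

definition num_sym_classes :: "nat \<Rightarrow> nat" where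
  "num_sym_classes k = card (sym_class k ` bvpats k)"

definition num_involutions :: "nat \<Rightarrow> nat" where
  "num_involutions n = (\<Sum>k\<le>n div 2. fact n div (fact k * fact (n - 2 * k) * 2 ^ k))"

end

theory Submission
  imports Defs "HOL-Algebra.Group_Action"
begin

text \<open>The maps \<open>i\<close>, \<open>r\<close>, \<open>c\<close> generate an action of the dihedral group of order 8 on the
  patterns of length \<open>n\<close>, so by Burnside's lemma \<open>8 s\<^sub>n\<close> is the total number of patterns fixed by
  the eight group elements. For a fixed pattern \<open>(\<sigma>, X, Y)\<close> the conditions on \<open>\<sigma>\<close> and on
  \<open>X\<close>, \<open>Y\<close> separate. Apart from \<open>r\<close> and \<open>c\<close>, which fix nothing when \<open>n \<ge> 2\<close>, they say that
  \<open>\<sigma>\<close> is arbitrary, an involution, a permutation commuting with the reversal \<open>j \<mapsto> n + 1 - j\<close>,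
  or a square root of that reversal, and that \<open>X\<close>, \<open>Y\<close> are arbitrary, equal, or symmetric
  under \<open>x \<mapsto> n - x\<close>. Away from a possible middle point the reversal is a fixed-point-free
  involution with \<open>h = \<lfloor>n/2\<rfloor>\<close> two-cycles; recursing on the image of one point shows that
  \<open>2\<^sup>h h!\<close> permutations commute with it and that it has \<open>(2m)!/m!\<close> square roots if \<open>h = 2m\<close>
  and none if \<open>h\<close> is odd.\<close>

no_notation m_inv (\<open>(\<open>open_block notation=\<open>prefix inv\<close>\<close>inv\<index> _)\<close> [81] 80)
  \<comment> \<open>so that \<open>inv\<close> denotes the inverse function, as in the definitions\<close>

lemma permutes_Diff_fixpoints:
  assumes "\<sigma> permutes S" "\<forall>a\<in>A. \<sigma> a = a"
  shows "\<sigma> permutes (S - A)"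
  using assms unfolding permutes_def by (metis Diff_iff)

lemma permutes_inv_eq_self_iff:
  assumes "\<sigma> permutes S"
  shows "inv \<sigma> = \<sigma> \<longleftrightarrow> (\<forall>x\<in>S. \<sigma> (\<sigma> x) = x)"
proof
  assume "inv \<sigma> = \<sigma>"
  then show "\<forall>x\<in>S. \<sigma> (\<sigma> x) = x"
    using permutes_inverses(1)[OF assms] by metis
next
  assume "\<forall>x\<in>S. \<sigma> (\<sigma> x) = x"
  then have "\<sigma> (\<sigma> x) = x" for x
    using permutes_not_in[OF assms] by (cases "x \<in> S") auto
  then show "inv \<sigma> = \<sigma>"
    using permutes_inv_eq[OF assms] by (simp add: fun_eq_iff)
qed

lemma card_eq_sum_card_fibres:
  assumes "finite A" "finite B" "f ` A \<subseteq> B"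
  shows "card A = (\<Sum>b\<in>B. card {x \<in> A. f x = b})"
proof -
  have "A = (\<Union>b\<in>B. {x \<in> A. f x = b})" using assms(3) by blast
  also have "card \<dots> = (\<Sum>b\<in>B. card {x \<in> A. f x = b})"
    by (rule card_UN_disjoint) (use assms in auto)
  finally show ?thesis .
qed

lemma card_comp_image:
  assumes "inj t"
  shows "card ((\<circ>) t ` A) = card A"
proof (rule card_image, rule inj_onI)
  fix \<sigma> \<tau>
  assume "t \<circ> \<sigma> = t \<circ> \<tau>"
  then show "\<sigma> = \<tau>"
    using assms by (simp add: fun_eq_iff inj_eq)
qed

lemma card_diagonal_image: "card ((\<lambda>X. (X, f X)) ` A) = card A"
  by (rule card_image) (auto simp: inj_on_def)

section \<open>Involutions\<close>

fun double_fact_odd :: "nat \<Rightarrow> nat" where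
  "double_fact_odd 0 = 1"
| "double_fact_odd (Suc j) = (2 * j + 1) * double_fact_odd j"

lemma fact_double: "fact (2 * j) = double_fact_odd j * fact j * 2 ^ j"
proof (induction j)
  case (Suc j)
  have "fact (2 * Suc j) = (2 * j + 2) * ((2 * j + 1) * fact (2 * j))"
    by (simp add: fact_Suc algebra_simps)
  then show ?case
    using Suc by (simp add: fact_Suc algebra_simps)
qed simp

text \<open>\<open>involution_term n j\<close> counts the involutions of an \<open>n\<close>-set with exactly \<open>j\<close> two-cycles.\<close>
definition involution_term :: "nat \<Rightarrow> nat \<Rightarrow> nat" where
  "involution_term n j = (n choose (2 * j)) * double_fact_odd j"

lemma involution_term_eq_div:
  assumes "2 * j \<le> n"
  shows "fact n div (fact j * fact (n - 2 * j) * 2 ^ j) = involution_term n j"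
proof -
  have "fact n = fact (2 * j) * fact (n - 2 * j) * (n choose (2 * j))"
    using binomial_fact_lemma[OF assms] by simp
  also have "\<dots> = involution_term n j * (fact j * fact (n - 2 * j) * 2 ^ j)"
    unfolding involution_term_def fact_double by (simp add: algebra_simps)
  finally show ?thesis by simp
qed

lemma involution_term_Suc_Suc:
  "involution_term (Suc (Suc n)) (Suc j) = involution_term (Suc n) (Suc j) + Suc n * involution_term n j"
proof -
  have pascal: "(Suc (Suc n) choose Suc (Suc (2 * j)))
      = (Suc n choose Suc (2 * j)) + (Suc n choose Suc (Suc (2 * j)))"
    by simp
  have absorb: "(Suc n choose Suc (2 * j)) * (2 * j + 1) = Suc n * (n choose (2 * j))"
    using Suc_times_binomial[of "2 * j" n] by (simp add: algebra_simps)
  have "involution_term (Suc (Suc n)) (Suc j)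
      = (Suc n choose Suc (Suc (2 * j))) * ((2 * j + 1) * double_fact_odd j)
        + ((Suc n choose Suc (2 * j)) * (2 * j + 1)) * double_fact_odd j"
    unfolding involution_term_def using pascal by (simp add: algebra_simps)
  also have "\<dots> = involution_term (Suc n) (Suc j) + Suc n * involution_term n j"
    unfolding absorb involution_term_def by (simp add: algebra_simps)
  finally show ?thesis .
qed

lemma num_involutions_eq_sum:
  assumes "n div 2 \<le> N"
  shows "num_involutions n = (\<Sum>j\<le>N. involution_term n j)"
proof -
  have "num_involutions n = (\<Sum>j\<le>n div 2. involution_term n j)"
    unfolding num_involutions_def by (rule sum.cong) (auto intro: involution_term_eq_div)
  also have "\<dots> = (\<Sum>j\<le>N. involution_term n j)"
    by (rule sum.mono_neutral_left) (use assms in \<open>auto simp: involution_term_def\<close>)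
  finally show ?thesis .
qed

lemma involution_term_0: "involution_term n 0 = 1"
  by (simp add: involution_term_def)

lemma num_involutions_0 [simp]: "num_involutions 0 = 1"
  and num_involutions_1 [simp]: "num_involutions (Suc 0) = 1"
  by (simp_all add: num_involutions_def)

lemma num_involutions_Suc_Suc:
  "num_involutions (Suc (Suc n)) = num_involutions (Suc n) + Suc n * num_involutions n"
proof -
  let ?T = involution_term
  have shift: "num_involutions m = 1 + (\<Sum>j\<le>n. ?T m (Suc j))" if "m div 2 \<le> Suc n" for m
    unfolding num_involutions_eq_sum[OF that] sum.atMost_Suc_shift involution_term_0 ..
  have "num_involutions (Suc (Suc n)) = (1 + (\<Sum>j\<le>n. ?T (Suc n) (Suc j))) + Suc n * (\<Sum>j\<le>n. ?T n j)"
    unfolding shift[of "Suc (Suc n)", simplified] involution_term_Suc_Suc sum.distrib sum_distrib_left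
    by simp
  also have "\<dots> = num_involutions (Suc n) + Suc n * num_involutions n"
    using shift[of "Suc n"] num_involutions_eq_sum[of n n] by simp
  finally show ?thesis .
qed

definition involutions :: "'a set \<Rightarrow> ('a \<Rightarrow> 'a) set" where
  "involutions S = {\<sigma>. \<sigma> permutes S \<and> (\<forall>x\<in>S. \<sigma> (\<sigma> x) = x)}"

lemma finite_involutions: "finite S \<Longrightarrow> finite (involutions S)"
  by (rule finite_subset[OF _ finite_permutations]) (auto simp: involutions_def)

lemma involutions_fixing:
  assumes "a \<in> S"
  shows "{\<sigma> \<in> involutions S. \<sigma> a = a} = involutions (S - {a})"
proof (intro equalityI subsetI)
  fix \<sigma> assume "\<sigma> \<in> {\<sigma> \<in> involutions S. \<sigma> a = a}"
  then show "\<sigma> \<in> involutions (S - {a})"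
    using permutes_Diff_fixpoints[of \<sigma> S "{a}"] by (auto simp: involutions_def)
next
  fix \<sigma> assume "\<sigma> \<in> involutions (S - {a})"
  then show "\<sigma> \<in> {\<sigma> \<in> involutions S. \<sigma> a = a}"
    using permutes_subset[of \<sigma> "S - {a}" S] by (auto simp: involutions_def permutes_not_in)
qed

lemma involutions_swapping:
  assumes "a \<in> S" "b \<in> S" "a \<noteq> b"
  shows "{\<sigma> \<in> involutions S. \<sigma> a = b} = (\<circ>) (transpose a b) ` involutions (S - {a, b})"
proof (intro equalityI subsetI)
  fix \<sigma> assume "\<sigma> \<in> {\<sigma> \<in> involutions S. \<sigma> a = b}"
  then have perm: "\<sigma> permutes S" and invol: "\<And>x. x \<in> S \<Longrightarrow> \<sigma> (\<sigma> x) = x" and "\<sigma> a = b"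
    by (auto simp: involutions_def)
  moreover have "\<sigma> b = a"
    using invol[OF \<open>a \<in> S\<close>] \<open>\<sigma> a = b\<close> by simp
  ultimately have outside: "\<sigma> x \<notin> {a, b}" if "x \<in> S - {a, b}" for x
    using that invol by force
  define \<tau> where "\<tau> = transpose a b \<circ> \<sigma>"
  have "\<tau> permutes S"
    unfolding \<tau>_def by (intro permutes_compose perm permutes_swap_id assms)
  then have "\<tau> permutes S - {a, b}"
    by (rule permutes_Diff_fixpoints) (simp add: \<tau>_def \<open>\<sigma> a = b\<close> \<open>\<sigma> b = a\<close>)
  moreover have "\<tau> (\<tau> x) = x" if "x \<in> S - {a, b}" for x
    using outside[OF that] that invol by (simp add: \<tau>_def)
  moreover have "\<sigma> = transpose a b \<circ> \<tau>"
    by (simp add: \<tau>_def fun_eq_iff)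
  ultimately show "\<sigma> \<in> (\<circ>) (transpose a b) ` involutions (S - {a, b})"
    by (auto simp: involutions_def)
next
  fix \<sigma> assume "\<sigma> \<in> (\<circ>) (transpose a b) ` involutions (S - {a, b})"
  then obtain \<tau> where perm: "\<tau> permutes S - {a, b}"
    and invol: "\<And>x. x \<in> S - {a, b} \<Longrightarrow> \<tau> (\<tau> x) = x" and \<sigma>: "\<sigma> = transpose a b \<circ> \<tau>"
    by (auto simp: involutions_def)
  have fix_ab: "\<tau> a = a" "\<tau> b = b"
    using perm by (auto simp: permutes_not_in)
  have "\<sigma> permutes S"
    unfolding \<sigma> by (intro permutes_compose permutes_swap_id assms permutes_subset[OF perm]) auto
  moreover have "\<sigma> (\<sigma> x) = x" if "x \<in> S" for x
  proof (cases "x \<in> {a, b}")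
    case False
    then have "\<tau> x \<in> S - {a, b}"
      using that permutes_in_image[OF perm] by simp
    then show ?thesis
      using False that invol by (simp add: \<sigma>)
  qed (use fix_ab \<sigma> in auto)
  ultimately show "\<sigma> \<in> {\<sigma> \<in> involutions S. \<sigma> a = b}"
    using fix_ab by (simp add: involutions_def \<sigma>)
qed

lemma card_involutions_split:
  assumes "finite S" "a \<in> S"
  shows "card (involutions S)
    = card (involutions (S - {a})) + (\<Sum>b\<in>S - {a}. card (involutions (S - {a, b})))"
proof -
  have "card (involutions S) = (\<Sum>b\<in>S. card {\<sigma> \<in> involutions S. \<sigma> a = b})"
    by (rule card_eq_sum_card_fibres)
      (use assms finite_involutions in \<open>auto simp: involutions_def permutes_in_image\<close>)
  also have "\<dots> = card {\<sigma> \<in> involutions S. \<sigma> a = a}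
      + (\<Sum>b\<in>S - {a}. card {\<sigma> \<in> involutions S. \<sigma> a = b})"
    using assms by (simp add: sum.remove)
  also have "\<dots> = card (involutions (S - {a})) + (\<Sum>b\<in>S - {a}. card (involutions (S - {a, b})))"
  proof -
    have "card {\<sigma> \<in> involutions S. \<sigma> a = b} = card (involutions (S - {a, b}))" if "b \<in> S - {a}" for b
      using that assms involutions_swapping[of a S b] card_comp_image[OF inj_transpose] by auto
    then show ?thesis
      using assms by (simp add: involutions_fixing)
  qed
  finally show ?thesis .
qed

lemma card_involutions:
  "finite S \<Longrightarrow> card (involutions S) = num_involutions (card S)"
proof (induction "card S" arbitrary: S rule: less_induct)
  case less
  show ?case
  proof (cases "S = {}")
    case True
    then have "involutions S = {id}"
      by (auto simp: involutions_def)
    then show ?thesis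
      using True by simp
  next
    case False
    then obtain a where a: "a \<in> S" by blast
    then obtain n where n: "card S = Suc n"
      using less.prems card_gt_0_iff by (metis gr0_conv_Suc empty_iff)
    have IH: "card (involutions T) = num_involutions (card T)" if "T \<subset> S" for T
      using less that by (meson finite_subset psubset_card_mono psubset_imp_subset)
    have "card (involutions (S - {a, b})) = num_involutions (n - 1)" if "b \<in> S - {a}" for b
      using IH[of "S - {a, b}"] that a n less.prems by (auto simp: card_Diff_subset, blast)
    then have "card (involutions S) = num_involutions n + (\<Sum>b\<in>S - {a}. num_involutions (n - 1))"
      using card_involutions_split[OF less.prems a] IH[of "S - {a}"] a n by auto
    also have "\<dots> = num_involutions (Suc n)"
      using a n by (cases n) (simp_all add: num_involutions_Suc_Suc)
    finally show ?thesis
      using n by simp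
  qed
qed

section \<open>Centralizer and square roots of a fixed-point-free involution\<close>

definition fpf_involution :: "('a \<Rightarrow> 'a) \<Rightarrow> 'a set \<Rightarrow> bool" where
  "fpf_involution \<rho> S \<longleftrightarrow> (\<forall>x\<in>S. \<rho> x \<in> S \<and> \<rho> (\<rho> x) = x \<and> \<rho> x \<noteq> x)"

lemma fpf_involutionD:
  assumes "fpf_involution \<rho> S" "x \<in> S"
  shows "\<rho> x \<in> S" "\<rho> (\<rho> x) = x" "\<rho> x \<noteq> x"
  using assms by (auto simp: fpf_involution_def)

lemma fpf_involution_avoids_pair:
  assumes "fpf_involution \<rho> S" "a \<in> S" "x \<in> S" "x \<notin> {a, \<rho> a}"
  shows "\<rho> x \<notin> {a, \<rho> a}"
proof
  assume "\<rho> x \<in> {a, \<rho> a}"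
  then have "\<rho> (\<rho> x) \<in> {\<rho> a, \<rho> (\<rho> a)}"
    by auto
  then show False
    using assms fpf_involutionD(2)[OF assms(1)] by auto
qed

lemma fpf_involution_Diff_pair:
  assumes "fpf_involution \<rho> S" "a \<in> S"
  shows "fpf_involution \<rho> (S - {a, \<rho> a})"
  using assms fpf_involution_avoids_pair[OF assms] by (auto simp: fpf_involution_def)

lemma card_Diff_pair:
  assumes "finite S" "fpf_involution \<rho> S" "a \<in> S"
  shows "card (S - {a, \<rho> a}) = card S - 2"
  using assms fpf_involutionD[OF assms(2,3)] by (simp add: card_Diff_subset)

definition perm_centralizer :: "('a \<Rightarrow> 'a) \<Rightarrow> 'a set \<Rightarrow> ('a \<Rightarrow> 'a) set" where
  "perm_centralizer \<rho> S = {\<sigma>. \<sigma> permutes S \<and> (\<forall>x\<in>S. \<sigma> (\<rho> x) = \<rho> (\<sigma> x))}"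

lemma finite_perm_centralizer: "finite S \<Longrightarrow> finite (perm_centralizer \<rho> S)"
  by (rule finite_subset[OF _ finite_permutations]) (auto simp: perm_centralizer_def)

lemma perm_centralizer_comp:
  assumes "\<sigma> \<in> perm_centralizer \<rho> S" "\<tau> \<in> perm_centralizer \<rho> S"
  shows "\<sigma> \<circ> \<tau> \<in> perm_centralizer \<rho> S"
  using assms permutes_compose[of \<tau> S \<sigma>]
  by (auto simp: perm_centralizer_def permutes_in_image)

lemma perm_centralizer_inv:
  assumes "\<sigma> \<in> perm_centralizer \<rho> S"
  shows "inv \<sigma> \<in> perm_centralizer \<rho> S"
proof -
  have perm: "\<sigma> permutes S" and comm: "\<And>x. x \<in> S \<Longrightarrow> \<sigma> (\<rho> x) = \<rho> (\<sigma> x)"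
    using assms by (auto simp: perm_centralizer_def)
  have "inv \<sigma> (\<rho> x) = \<rho> (inv \<sigma> x)" if "x \<in> S" for x
  proof -
    have "inv \<sigma> x \<in> S"
      using that permutes_in_image[OF permutes_inv[OF perm]] by simp
    then have "\<sigma> (\<rho> (inv \<sigma> x)) = \<rho> x"
      using comm permutes_inverses(1)[OF perm] by simp
    then show ?thesis
      using permutes_inv_eq[OF perm] by blast
  qed
  then show ?thesis
    using permutes_inv[OF perm] by (simp add: perm_centralizer_def)
qed

lemma perm_centralizer_fixing:
  assumes "fpf_involution \<rho> S" "a \<in> S"
  shows "{\<sigma> \<in> perm_centralizer \<rho> S. \<sigma> a = a} = perm_centralizer \<rho> (S - {a, \<rho> a})"
proof (intro equalityI subsetI)
  fix \<sigma> assume "\<sigma> \<in> {\<sigma> \<in> perm_centralizer \<rho> S. \<sigma> a = a}"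
  then have "\<sigma> permutes S" "\<forall>x\<in>S. \<sigma> (\<rho> x) = \<rho> (\<sigma> x)" "\<sigma> a = a" "\<sigma> (\<rho> a) = \<rho> a"
    using assms(2) by (auto simp: perm_centralizer_def)
  then show "\<sigma> \<in> perm_centralizer \<rho> (S - {a, \<rho> a})"
    using permutes_Diff_fixpoints[of \<sigma> S "{a, \<rho> a}"] by (simp add: perm_centralizer_def)
next
  fix \<sigma> assume "\<sigma> \<in> perm_centralizer \<rho> (S - {a, \<rho> a})"
  then have perm: "\<sigma> permutes S - {a, \<rho> a}" and comm: "\<forall>x\<in>S - {a, \<rho> a}. \<sigma> (\<rho> x) = \<rho> (\<sigma> x)"
    by (auto simp: perm_centralizer_def)
  have "\<sigma> a = a" "\<sigma> (\<rho> a) = \<rho> a"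
    using perm by (auto simp: permutes_not_in)
  moreover have "\<sigma> (\<rho> x) = \<rho> (\<sigma> x)" if "x \<in> S" for x
    using that comm calculation fpf_involutionD(2)[OF assms] by (cases "x \<in> {a, \<rho> a}") auto
  ultimately show "\<sigma> \<in> {\<sigma> \<in> perm_centralizer \<rho> S. \<sigma> a = a}"
    using permutes_subset[OF perm] by (auto simp: perm_centralizer_def)
qed

lemma perm_centralizer_memI:
  assumes "t permutes S" "Q \<subseteq> S" "\<forall>x\<in>S - Q. t x = x \<and> \<rho> x \<notin> Q" "\<forall>x\<in>Q. t (\<rho> x) = \<rho> (t x)"
  shows "t \<in> perm_centralizer \<rho> S"
proof -
  have "t (\<rho> x) = \<rho> (t x)" if "x \<in> S" for x
  proof (cases "x \<in> Q")
    case False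
    then have "t x = x" "\<rho> x \<notin> Q"
      using assms(3) that by auto
    moreover have "t (\<rho> x) = \<rho> x"
      using \<open>\<rho> x \<notin> Q\<close> assms(1,3) by (cases "\<rho> x \<in> S") (auto simp: permutes_not_in)
    ultimately show ?thesis
      by simp
  qed (use assms(4) in auto)
  then show ?thesis
    using assms(1) by (simp add: perm_centralizer_def)
qed

lemma perm_centralizer_transitive:
  assumes \<rho>: "fpf_involution \<rho> S" and a: "a \<in> S" and b: "b \<in> S"
  shows "\<exists>t\<in>perm_centralizer \<rho> S. t a = b"
proof -
  note \<rho>a = fpf_involutionD[OF \<rho> a] and \<rho>b = fpf_involutionD[OF \<rho> b]
  consider "b = a" | "b = \<rho> a" | "b \<notin> {a, \<rho> a}" by blast
  then show ?thesis
  proof cases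
    case 1
    have "id \<in> perm_centralizer \<rho> S"
      by (simp add: perm_centralizer_def)
    then show ?thesis
      using 1 by (intro bexI[of _ id]) auto
  next
    case 2
    let ?t = "transpose a (\<rho> a)"
    have "?t \<in> perm_centralizer \<rho> S"
      by (rule perm_centralizer_memI[where Q = "{a, \<rho> a}"])
        (use a \<rho>a fpf_involution_avoids_pair[OF \<rho> a] in \<open>auto intro: permutes_swap_id\<close>)
    then show ?thesis
      using 2 by (intro bexI[of _ ?t]) auto
  next
    case 3
    then have "\<rho> b \<notin> {a, \<rho> a}"
      using fpf_involution_avoids_pair[OF \<rho> a b] by blast
    let ?t = "transpose a b \<circ> transpose (\<rho> a) (\<rho> b)"
    have "?t \<in> perm_centralizer \<rho> S"
    proof (rule perm_centralizer_memI[where Q = "{a, \<rho> a, b, \<rho> b}"])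
      show "?t permutes S"
        by (intro permutes_compose permutes_swap_id a b \<rho>a(1) \<rho>b(1))
      show "\<forall>x\<in>S - {a, \<rho> a, b, \<rho> b}. ?t x = x \<and> \<rho> x \<notin> {a, \<rho> a, b, \<rho> b}"
        using fpf_involution_avoids_pair[OF \<rho> a] fpf_involution_avoids_pair[OF \<rho> b] by auto
      show "\<forall>x\<in>{a, \<rho> a, b, \<rho> b}. ?t (\<rho> x) = \<rho> (?t x)"
        using 3 \<open>\<rho> b \<notin> {a, \<rho> a}\<close> \<rho>a \<rho>b by (auto simp: transpose_def)
    qed (use a b \<rho>a \<rho>b in auto)
    then show ?thesis
      using 3 \<open>\<rho> b \<notin> {a, \<rho> a}\<close> \<rho>a by (intro bexI[of _ ?t]) (auto simp: transpose_def)
  qed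
qed

lemma perm_centralizer_fibre:
  assumes t: "t \<in> perm_centralizer \<rho> S" "t a = b"
  shows "{\<sigma> \<in> perm_centralizer \<rho> S. \<sigma> a = b} = (\<circ>) t ` {\<sigma> \<in> perm_centralizer \<rho> S. \<sigma> a = a}"
proof (intro equalityI subsetI)
  have perm: "t permutes S"
    using t by (simp add: perm_centralizer_def)
  fix \<sigma> assume \<sigma>: "\<sigma> \<in> {\<sigma> \<in> perm_centralizer \<rho> S. \<sigma> a = b}"
  have "inv t \<circ> \<sigma> \<in> perm_centralizer \<rho> S"
    using \<sigma> perm_centralizer_comp[OF perm_centralizer_inv[OF t(1)]] by blast
  moreover have "(inv t \<circ> \<sigma>) a = a"
    using \<sigma> t permutes_inverses(2)[OF perm] by auto
  moreover have "\<sigma> = t \<circ> (inv t \<circ> \<sigma>)"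
    using permutes_inverses(1)[OF perm] by (simp add: fun_eq_iff)
  ultimately show "\<sigma> \<in> (\<circ>) t ` {\<sigma> \<in> perm_centralizer \<rho> S. \<sigma> a = a}"
    by blast
next
  fix \<sigma> assume "\<sigma> \<in> (\<circ>) t ` {\<sigma> \<in> perm_centralizer \<rho> S. \<sigma> a = a}"
  then show "\<sigma> \<in> {\<sigma> \<in> perm_centralizer \<rho> S. \<sigma> a = b}"
    using perm_centralizer_comp[OF t(1)] t(2) by auto
qed

lemma card_perm_centralizer_split:
  assumes "finite S" "fpf_involution \<rho> S" "a \<in> S"
  shows "card (perm_centralizer \<rho> S) = card S * card (perm_centralizer \<rho> (S - {a, \<rho> a}))"
proof -
  have "card (perm_centralizer \<rho> S) = (\<Sum>b\<in>S. card {\<sigma> \<in> perm_centralizer \<rho> S. \<sigma> a = b})"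
    by (rule card_eq_sum_card_fibres)
      (use assms finite_perm_centralizer in \<open>auto simp: perm_centralizer_def permutes_in_image\<close>)
  also have "\<dots> = (\<Sum>b\<in>S. card (perm_centralizer \<rho> (S - {a, \<rho> a})))"
  proof (rule sum.cong)
    fix b assume "b \<in> S"
    then obtain t where t: "t \<in> perm_centralizer \<rho> S" "t a = b"
      using perm_centralizer_transitive[OF assms(2,3)] by blast
    then have "inj t"
      by (auto simp: perm_centralizer_def permutes_inj)
    then show "card {\<sigma> \<in> perm_centralizer \<rho> S. \<sigma> a = b} = card (perm_centralizer \<rho> (S - {a, \<rho> a}))"
      using perm_centralizer_fibre[OF t] perm_centralizer_fixing[OF assms(2,3)] card_comp_image by metis
  qed simp
  finally show ?thesis
    by simp
qed

lemma card_perm_centralizer: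
  assumes "finite S" "fpf_involution \<rho> S" "card S = 2 * h"
  shows "card (perm_centralizer \<rho> S) = 2 ^ h * fact h"
  using assms
proof (induction h arbitrary: S)
  case 0
  then have "perm_centralizer \<rho> S = {id}"
    by (auto simp: perm_centralizer_def)
  then show ?case
    by simp
next
  case (Suc h)
  then obtain a where a: "a \<in> S"
    by fastforce
  have "card (perm_centralizer \<rho> (S - {a, \<rho> a})) = 2 ^ h * fact h"
    using Suc a by (simp add: fpf_involution_Diff_pair card_Diff_pair)
  then show ?case
    using Suc card_perm_centralizer_split[OF Suc.prems(1,2) a] by (simp add: algebra_simps)
qed

definition perm_square_roots :: "('a \<Rightarrow> 'a) \<Rightarrow> 'a set \<Rightarrow> ('a \<Rightarrow> 'a) set" where
  "perm_square_roots \<rho> S = {\<sigma>. \<sigma> permutes S \<and> (\<forall>x\<in>S. \<sigma> (\<sigma> x) = \<rho> x)}"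

lemma finite_perm_square_roots: "finite S \<Longrightarrow> finite (perm_square_roots \<rho> S)"
  by (rule finite_subset[OF _ finite_permutations]) (auto simp: perm_square_roots_def)

lemma perm_square_root_moves_pair:
  assumes \<rho>: "fpf_involution \<rho> S" and a: "a \<in> S" and \<sigma>: "\<sigma> \<in> perm_square_roots \<rho> S"
  shows "\<sigma> a \<in> S - {a, \<rho> a}"
proof -
  have perm: "\<sigma> permutes S" and sq: "\<And>x. x \<in> S \<Longrightarrow> \<sigma> (\<sigma> x) = \<rho> x"
    using \<sigma> by (auto simp: perm_square_roots_def)
  have "\<sigma> a \<noteq> a"
    using sq[OF a] fpf_involutionD(3)[OF \<rho> a] by force
  moreover have "\<sigma> a \<noteq> \<rho> a"
  proof
    assume "\<sigma> a = \<rho> a"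
    then have "\<sigma> (\<rho> a) = \<sigma> a"
      using sq[OF a] by simp
    then show False
      using permutes_inj[OF perm] fpf_involutionD(3)[OF \<rho> a] by (simp add: inj_eq)
  qed
  ultimately show ?thesis
    using a perm by (simp add: permutes_in_image)
qed

lemma perm_square_roots_glue:
  assumes "Q \<subseteq> S" "c \<in> perm_square_roots \<rho> Q" "\<tau> \<in> perm_square_roots \<rho> (S - Q)"
  shows "c \<circ> \<tau> \<in> perm_square_roots \<rho> S"
proof -
  have c: "c permutes Q" "\<And>x. x \<in> Q \<Longrightarrow> c (c x) = \<rho> x"
    and \<tau>: "\<tau> permutes S - Q" "\<And>x. x \<in> S - Q \<Longrightarrow> \<tau> (\<tau> x) = \<rho> x"
    using assms(2,3) by (auto simp: perm_square_roots_def)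
  have "(c \<circ> \<tau>) ((c \<circ> \<tau>) x) = \<rho> x" if "x \<in> S" for x
  proof (cases "x \<in> Q")
    case True
    then show ?thesis
      using c \<tau>(1) by (simp add: permutes_not_in permutes_in_image)
  next
    case False
    then have "\<tau> x \<in> S - Q" "\<tau> (\<tau> x) \<in> S - Q"
      using that permutes_in_image[OF \<tau>(1)] by auto
    then show ?thesis
      using c(1) \<tau>(2) that False by (simp add: permutes_not_in)
  qed
  moreover have "c \<circ> \<tau> permutes S"
    using assms(1) permutes_subset[OF c(1)] permutes_subset[OF \<tau>(1)] by (blast intro: permutes_compose)
  ultimately show ?thesis
    by (simp add: perm_square_roots_def)
qed

lemma perm_square_roots_split:
  assumes "Q \<subseteq> S" "c \<in> perm_square_roots \<rho> Q" "\<sigma> \<in> perm_square_roots \<rho> S" "\<forall>x\<in>Q. \<sigma> x = c x"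
  shows "\<exists>\<tau>\<in>perm_square_roots \<rho> (S - Q). \<sigma> = c \<circ> \<tau>"
proof -
  have c: "c permutes Q" and \<sigma>: "\<sigma> permutes S" "\<And>x. x \<in> S \<Longrightarrow> \<sigma> (\<sigma> x) = \<rho> x"
    using assms(2,3) by (auto simp: perm_square_roots_def)
  have stays: "\<sigma> x \<in> S - Q" if x: "x \<in> S - Q" for x
  proof -
    have "\<sigma> x \<notin> c ` Q"
    proof
      assume "\<sigma> x \<in> c ` Q"
      then obtain y where "y \<in> Q" "\<sigma> x = \<sigma> y"
        using assms(4) by force
      then show False
        using x permutes_inj[OF \<sigma>(1)] by (auto dest: injD)
    qed
    then show ?thesis
      using x permutes_image[OF c] permutes_in_image[OF \<sigma>(1)] by auto
  qed
  define \<tau> where "\<tau> = inv c \<circ> \<sigma>"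
  have \<tau>_outside: "\<tau> x = \<sigma> x" if "x \<in> S - Q" for x
    using stays[OF that] permutes_not_in[OF permutes_inv[OF c]] by (simp add: \<tau>_def)
  have "\<tau> permutes S"
    unfolding \<tau>_def using \<sigma>(1) permutes_subset[OF permutes_inv[OF c] assms(1)] by (rule permutes_compose)
  moreover have "\<forall>x\<in>Q. \<tau> x = x"
    using assms(4) permutes_inverses(2)[OF c] by (simp add: \<tau>_def)
  ultimately have "\<tau> permutes S - Q"
    by (rule permutes_Diff_fixpoints)
  moreover have "\<tau> (\<tau> x) = \<rho> x" if "x \<in> S - Q" for x
  proof -
    have "\<tau> (\<tau> x) = \<sigma> (\<sigma> x)"
      using that stays[OF that] \<tau>_outside by metis
    then show ?thesis
      using that \<sigma>(2) by simp
  qed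
  moreover have "\<sigma> = c \<circ> \<tau>"
    using permutes_inverses(1)[OF c] by (simp add: \<tau>_def fun_eq_iff)
  ultimately show ?thesis
    by (auto simp: perm_square_roots_def)
qed

text \<open>\<open>c\<close> is the 4-cycle \<open>(a b \<rho>a \<rho>b)\<close>, the only square root of \<open>\<rho>\<close> on \<open>{a, \<rho>a, b, \<rho>b}\<close> sending \<open>a\<close> to \<open>b\<close>.\<close>
lemma four_cycle_square_root:
  assumes \<rho>: "fpf_involution \<rho> S" and a: "a \<in> S" and b: "b \<in> S - {a, \<rho> a}"
  defines "c \<equiv> transpose a (\<rho> b) \<circ> transpose a (\<rho> a) \<circ> transpose a b"
  shows "c \<in> perm_square_roots \<rho> {a, \<rho> a, b, \<rho> b}"
    and "c a = b" "c b = \<rho> a" "c (\<rho> a) = \<rho> b" "c (\<rho> b) = a"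
proof -
  note \<rho>a = fpf_involutionD[OF \<rho> a] and \<rho>b = fpf_involutionD[OF \<rho> DiffD1[OF b]]
  have "\<rho> b \<notin> {a, \<rho> a}"
    using fpf_involution_avoids_pair[OF \<rho> a] b by blast
  then show c_values: "c a = b" "c b = \<rho> a" "c (\<rho> a) = \<rho> b" "c (\<rho> b) = a"
    using b \<rho>a \<rho>b by (auto simp: c_def transpose_def)
  have "c permutes {a, \<rho> a, b, \<rho> b}"
    unfolding c_def by (intro permutes_compose permutes_swap_id) auto
  then show "c \<in> perm_square_roots \<rho> {a, \<rho> a, b, \<rho> b}"
    using c_values \<rho>a \<rho>b by (auto simp: perm_square_roots_def)
qed

lemma perm_square_roots_fibre:
  assumes \<rho>: "fpf_involution \<rho> S" and a: "a \<in> S" and b: "b \<in> S - {a, \<rho> a}"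
  defines "c \<equiv> transpose a (\<rho> b) \<circ> transpose a (\<rho> a) \<circ> transpose a b"
  shows "{\<sigma> \<in> perm_square_roots \<rho> S. \<sigma> a = b} = (\<circ>) c ` perm_square_roots \<rho> (S - {a, \<rho> a, b, \<rho> b})"
    (is "_ = _ ` perm_square_roots \<rho> (S - ?Q)")
proof -
  note c = four_cycle_square_root[OF assms(1-3), folded c_def]
  have Q: "?Q \<subseteq> S"
    using a b fpf_involutionD(1)[OF \<rho>] by auto
  show ?thesis
  proof (intro equalityI subsetI)
    fix \<sigma> assume "\<sigma> \<in> {\<sigma> \<in> perm_square_roots \<rho> S. \<sigma> a = b}"
    then have \<sigma>: "\<sigma> \<in> perm_square_roots \<rho> S" "\<sigma> a = b" and sq: "\<And>x. x \<in> S \<Longrightarrow> \<sigma> (\<sigma> x) = \<rho> x"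
      by (auto simp: perm_square_roots_def)
    have "\<sigma> b = \<rho> a"
      using sq[OF a] \<sigma>(2) by simp
    moreover have "\<sigma> (\<rho> a) = \<rho> b"
      using sq b \<open>\<sigma> b = \<rho> a\<close> by force
    moreover have "\<sigma> (\<rho> b) = a"
      using sq[of "\<rho> a"] \<open>\<sigma> (\<rho> a) = \<rho> b\<close> fpf_involutionD[OF \<rho> a] by simp
    ultimately have "\<forall>x\<in>?Q. \<sigma> x = c x"
      using c(2-5) \<sigma>(2) by auto
    then show "\<sigma> \<in> (\<circ>) c ` perm_square_roots \<rho> (S - ?Q)"
      using perm_square_roots_split[OF Q c(1) \<sigma>(1)] by blast
  next
    fix \<sigma> assume "\<sigma> \<in> (\<circ>) c ` perm_square_roots \<rho> (S - ?Q)"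
    then obtain \<tau> where \<tau>: "\<tau> \<in> perm_square_roots \<rho> (S - ?Q)" and \<sigma>: "\<sigma> = c \<circ> \<tau>"
      by blast
    have "\<tau> a = a"
      using \<tau> by (auto simp: perm_square_roots_def permutes_not_in)
    then show "\<sigma> \<in> {\<sigma> \<in> perm_square_roots \<rho> S. \<sigma> a = b}"
      using perm_square_roots_glue[OF Q c(1) \<tau>] c(2) \<sigma> by simp
  qed
qed

lemma card_perm_square_roots_split:
  assumes "finite S" "fpf_involution \<rho> S" "a \<in> S"
  shows "card (perm_square_roots \<rho> S)
    = (\<Sum>b\<in>S - {a, \<rho> a}. card (perm_square_roots \<rho> (S - {a, \<rho> a, b, \<rho> b})))"
proof -
  have "(\<lambda>\<sigma>. \<sigma> a) ` perm_square_roots \<rho> S \<subseteq> S - {a, \<rho> a}"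
    using perm_square_root_moves_pair[OF assms(2,3)] by (rule image_subsetI)
  then have "card (perm_square_roots \<rho> S)
      = (\<Sum>b\<in>S - {a, \<rho> a}. card {\<sigma> \<in> perm_square_roots \<rho> S. \<sigma> a = b})"
    using assms(1) finite_perm_square_roots by (intro card_eq_sum_card_fibres) auto
  also have "\<dots> = (\<Sum>b\<in>S - {a, \<rho> a}. card (perm_square_roots \<rho> (S - {a, \<rho> a, b, \<rho> b})))"
  proof (rule sum.cong)
    fix b assume b: "b \<in> S - {a, \<rho> a}"
    show "card {\<sigma> \<in> perm_square_roots \<rho> S. \<sigma> a = b}
        = card (perm_square_roots \<rho> (S - {a, \<rho> a, b, \<rho> b}))"
      unfolding perm_square_roots_fibre[OF assms(2,3) b]
      by (intro card_comp_image inj_compose inj_transpose)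
  qed simp
  finally show ?thesis .
qed

fun num_square_roots :: "nat \<Rightarrow> nat" where
  "num_square_roots 0 = 1"
| "num_square_roots (Suc 0) = 0"
| "num_square_roots (Suc (Suc h)) = (2 * h + 2) * num_square_roots h"

lemma card_perm_square_roots:
  assumes "finite S" "fpf_involution \<rho> S" "card S = 2 * h"
  shows "card (perm_square_roots \<rho> S) = num_square_roots h"
  using assms
proof (induction h arbitrary: S rule: num_square_roots.induct)
  case 1
  then have "perm_square_roots \<rho> S = {id}"
    by (auto simp: perm_square_roots_def)
  then show ?case
    by simp
next
  case 2
  then obtain a where a: "a \<in> S"
    by fastforce
  have "S - {a, \<rho> a} = {}"
    using 2 card_Diff_pair[OF 2(1,2) a] by simp
  then have "card (perm_square_roots \<rho> S) = 0"
    using card_perm_square_roots_split[OF 2(1,2) a] by (simp only: sum.empty)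
  then show ?case
    by simp
next
  case (3 h)
  then obtain a where a: "a \<in> S"
    by fastforce
  let ?S' = "S - {a, \<rho> a}"
  have \<rho>': "fpf_involution \<rho> ?S'" and card': "card ?S' = 2 * h + 2"
    using 3 a by (simp_all add: fpf_involution_Diff_pair card_Diff_pair)
  have "card (perm_square_roots \<rho> (S - {a, \<rho> a, b, \<rho> b})) = num_square_roots h" if "b \<in> ?S'" for b
  proof -
    have "S - {a, \<rho> a, b, \<rho> b} = ?S' - {b, \<rho> b}"
      by auto
    then show ?thesis
      using "3.IH" \<rho>' card' that 3(2) fpf_involution_Diff_pair[OF \<rho>' that] card_Diff_pair[OF _ \<rho>' that]
      by simp
  qed
  then show ?case
    using card_perm_square_roots_split[OF 3(2,3) a] card' by simp
qed

lemma num_square_roots_odd: "num_square_roots (2 * m + 1) = 0"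
  by (induction m) (auto simp: numeral_2_eq_2)

lemma num_square_roots_even_mult_fact: "num_square_roots (2 * m) * fact m = fact (2 * m)"
proof (induction m)
  case (Suc m)
  have "num_square_roots (2 * Suc m) * fact (Suc m) = ((4 * m + 2) * (m + 1)) * (num_square_roots (2 * m) * fact m)"
    by (simp add: fact_Suc algebra_simps)
  also have "\<dots> = fact (2 * Suc m)"
    by (simp only: Suc.IH) (simp add: fact_Suc algebra_simps)
  finally show ?case .
qed simp

lemma num_square_roots_even:
  assumes "m \<ge> 1"
  shows "num_square_roots (2 * m) = 2 * (fact (2 * m - 1) div fact (m - 1))"
proof -
  obtain n where m: "m = Suc n"
    using assms by (cases m) auto
  have "fact (Suc (2 * n)) = (2 * n + 1) * fact (2 * n)"
    by (simp add: fact_Suc)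
  also have "\<dots> = ((2 * n + 1) * num_square_roots (2 * n)) * fact n"
    by (subst num_square_roots_even_mult_fact[symmetric]) (simp only: mult_ac)
  finally have "fact (Suc (2 * n)) div fact n = (2 * n + 1) * num_square_roots (2 * n)"
    by simp
  then show ?thesis
    by (simp add: m numeral_2_eq_2 algebra_simps)
qed

lemma pow2_mult_num_square_roots_even:
  assumes "m \<ge> 1"
  shows "2 ^ (2 * m - 1) * num_square_roots (2 * m) = 2 ^ (2 * m) * (fact (2 * m - 1) div fact (m - 1))"
proof -
  have "2 ^ (2 * m - 1) * num_square_roots (2 * m) = (2 ^ (2 * m - 1) * 2) * (fact (2 * m - 1) div fact (m - 1))"
    unfolding num_square_roots_even[OF assms] by simp
  also have "2 ^ (2 * m - 1) * 2 = (2 :: nat) ^ (2 * m)"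
    using assms power_minus_mult[of "2 * m" "2 :: nat"] by simp
  finally show ?thesis .
qed

section \<open>Reversal of positions and values\<close>

definition mirror :: "nat \<Rightarrow> nat \<Rightarrow> nat" where
  "mirror k x = (if x \<in> {1..k} then k + 1 - x else x)"

lemma mirror_mirror [simp]: "mirror k (mirror k x) = x"
  by (auto simp: mirror_def)

lemma mirror_comp_mirror [simp]: "mirror k \<circ> mirror k = id"
  by (simp add: fun_eq_iff)

lemma mirror_comp_cancel: "mirror k \<circ> (mirror k \<circ> f) = f" "f \<circ> mirror k \<circ> mirror k = f"
  by (simp_all add: fun_eq_iff)

lemma mirror_permutes: "mirror k permutes {1..k}"
  unfolding permutes_def
proof (intro conjI allI impI)
  fix y
  show "\<exists>!x. mirror k x = y"
    by (rule ex1I[of _ "mirror k y"]) (auto dest: arg_cong[of _ _ "mirror k"])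
qed (auto simp: mirror_def)

lemma bij_mirror: "bij (mirror k)"
  using permutes_bij[OF mirror_permutes] .

lemma inv_mirror [simp]: "inv (mirror k) = mirror k"
  by (rule inv_unique_comp) simp_all

lemma fpf_involution_mirror_even:
  assumes "even k"
  shows "fpf_involution (mirror k) {1..k}"
  using assms by (auto simp: fpf_involution_def mirror_def) presburger

lemma mirror_middle:
  assumes "odd k"
  defines "c \<equiv> (k + 1) div 2"
  shows "c \<in> {1..k}" "mirror k c = c" "card ({1..k} - {c}) = 2 * (k div 2)"
    and "fpf_involution (mirror k) ({1..k} - {c})"
  using assms by (auto simp: c_def mirror_def fpf_involution_def elim!: oddE)

lemma perm_centralizer_Diff_fixpoint:
  assumes "c \<in> S" "\<rho> c = c" "fpf_involution \<rho> (S - {c})"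
  shows "perm_centralizer \<rho> S = perm_centralizer \<rho> (S - {c})"
proof (intro equalityI subsetI)
  fix \<sigma> assume "\<sigma> \<in> perm_centralizer \<rho> S"
  then have perm: "\<sigma> permutes S" and comm: "\<forall>x\<in>S. \<sigma> (\<rho> x) = \<rho> (\<sigma> x)"
    by (auto simp: perm_centralizer_def)
  have "\<sigma> c = c"
  proof (rule ccontr)
    assume "\<sigma> c \<noteq> c"
    then have "\<sigma> c \<in> S - {c}"
      using perm assms(1) by (simp add: permutes_in_image)
    then show False
      using comm assms(1,2) fpf_involutionD(3)[OF assms(3)] by metis
  qed
  then show "\<sigma> \<in> perm_centralizer \<rho> (S - {c})"
    using permutes_Diff_fixpoints[OF perm, of "{c}"] comm by (simp add: perm_centralizer_def)
next
  fix \<sigma> assume "\<sigma> \<in> perm_centralizer \<rho> (S - {c})"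
  then have "\<sigma> permutes S - {c}" "\<forall>x\<in>S - {c}. \<sigma> (\<rho> x) = \<rho> (\<sigma> x)"
    by (auto simp: perm_centralizer_def)
  then show "\<sigma> \<in> perm_centralizer \<rho> S"
    using assms(2) permutes_subset[of \<sigma> "S - {c}" S] by (auto simp: perm_centralizer_def permutes_not_in)
qed

lemma perm_square_roots_Diff_fixpoint:
  assumes "c \<in> S" "\<rho> c = c" "fpf_involution \<rho> (S - {c})"
  shows "perm_square_roots \<rho> S = perm_square_roots \<rho> (S - {c})"
proof (intro equalityI subsetI)
  fix \<sigma> assume "\<sigma> \<in> perm_square_roots \<rho> S"
  then have perm: "\<sigma> permutes S" and sq: "\<forall>x\<in>S. \<sigma> (\<sigma> x) = \<rho> x"
    by (auto simp: perm_square_roots_def)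
  have "\<sigma> c = c"
  proof (rule ccontr)
    assume "\<sigma> c \<noteq> c"
    then have "\<sigma> c \<in> S - {c}"
      using perm assms(1) by (simp add: permutes_in_image)
    moreover have "\<sigma> (\<sigma> (\<sigma> c)) = \<sigma> c"
      using sq assms(1,2) by simp
    ultimately show False
      using sq fpf_involutionD(3)[OF assms(3)] by force
  qed
  then show "\<sigma> \<in> perm_square_roots \<rho> (S - {c})"
    using permutes_Diff_fixpoints[OF perm, of "{c}"] sq by (simp add: perm_square_roots_def)
next
  fix \<sigma> assume "\<sigma> \<in> perm_square_roots \<rho> (S - {c})"
  then have "\<sigma> permutes S - {c}" "\<forall>x\<in>S - {c}. \<sigma> (\<sigma> x) = \<rho> x"
    by (auto simp: perm_square_roots_def)
  then show "\<sigma> \<in> perm_square_roots \<rho> S"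
    using assms(2) permutes_subset[of \<sigma> "S - {c}" S] by (auto simp: perm_square_roots_def permutes_not_in)
qed

lemma card_perm_centralizer_mirror:
  "card (perm_centralizer (mirror k) {1..k}) = 2 ^ (k div 2) * fact (k div 2)"
proof (cases "even k")
  case True
  then show ?thesis
    by (intro card_perm_centralizer fpf_involution_mirror_even) auto
next
  case False
  note middle = mirror_middle[OF False]
  show ?thesis
    unfolding perm_centralizer_Diff_fixpoint[OF middle(1,2,4)]
    by (intro card_perm_centralizer middle) simp
qed

lemma card_perm_square_roots_mirror:
  "card (perm_square_roots (mirror k) {1..k}) = num_square_roots (k div 2)"
proof (cases "even k")
  case True
  then show ?thesis
    by (intro card_perm_square_roots fpf_involution_mirror_even) auto
next
  case False
  note middle = mirror_middle[OF False]
  show ?thesis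
    unfolding perm_square_roots_Diff_fixpoint[OF middle(1,2,4)]
    by (intro card_perm_square_roots middle) simp
qed

lemma mirror_conj_eq_iff:
  assumes "\<sigma> permutes {1..k}"
  shows "mirror k \<circ> \<sigma> \<circ> mirror k = \<sigma> \<longleftrightarrow> (\<forall>x\<in>{1..k}. \<sigma> (mirror k x) = mirror k (\<sigma> x))"
proof
  assume conj: "mirror k \<circ> \<sigma> \<circ> mirror k = \<sigma>"
  show "\<forall>x\<in>{1..k}. \<sigma> (mirror k x) = mirror k (\<sigma> x)"
  proof
    fix x
    have "mirror k (\<sigma> (mirror k (mirror k x))) = \<sigma> (mirror k x)"
      using fun_cong[OF conj, of "mirror k x"] by simp
    then show "\<sigma> (mirror k x) = mirror k (\<sigma> x)"
      by simp
  qed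
next
  assume comm: "\<forall>x\<in>{1..k}. \<sigma> (mirror k x) = mirror k (\<sigma> x)"
  have "mirror k (\<sigma> (mirror k x)) = \<sigma> x" for x
  proof (cases "x \<in> {1..k}")
    case False
    then have "mirror k x = x" "\<sigma> x = x"
      using permutes_not_in[OF assms] by (auto simp: mirror_def)
    then show ?thesis
      by simp
  qed (use comm in simp)
  then show "mirror k \<circ> \<sigma> \<circ> mirror k = \<sigma>"
    by (simp add: fun_eq_iff)
qed

lemma inv_comp_mirror_eq_iff:
  assumes "\<sigma> permutes {1..k}"
  shows "inv \<sigma> \<circ> mirror k = \<sigma> \<longleftrightarrow> (\<forall>x\<in>{1..k}. \<sigma> (\<sigma> x) = mirror k x)"
proof -
  have "inv \<sigma> \<circ> mirror k = \<sigma> \<longleftrightarrow> (\<forall>x. inv \<sigma> (mirror k x) = \<sigma> x)"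
    by (simp add: fun_eq_iff)
  also have "\<dots> \<longleftrightarrow> (\<forall>x. \<sigma> (\<sigma> x) = mirror k x)"
    using permutes_inv_eq[OF assms] by metis
  also have "\<dots> \<longleftrightarrow> (\<forall>x\<in>{1..k}. \<sigma> (\<sigma> x) = mirror k x)"
  proof (intro iffI ballI allI)
    fix x assume on_S: "\<forall>x\<in>{1..k}. \<sigma> (\<sigma> x) = mirror k x"
    show "\<sigma> (\<sigma> x) = mirror k x"
    proof (cases "x \<in> {1..k}")
      case False
      then have "\<sigma> x = x" "mirror k x = x"
        using permutes_not_in[OF assms] by (auto simp: mirror_def)
      then show ?thesis
        by simp
    qed (use on_S in simp)
  qed simp
  finally show ?thesis .
qed

lemma mirror_comp_inv_eq_iff:
  assumes "\<sigma> permutes {1..k}"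
  shows "mirror k \<circ> inv \<sigma> = \<sigma> \<longleftrightarrow> inv \<sigma> \<circ> mirror k = \<sigma>"
proof -
  have \<sigma>: "bij \<sigma>"
    using permutes_bij[OF assms] .
  show ?thesis
  proof
    assume "mirror k \<circ> inv \<sigma> = \<sigma>"
    then have "inv \<sigma> = mirror k \<circ> \<sigma>"
      using mirror_comp_cancel(1)[of k "inv \<sigma>"] by simp
    then have "inv (inv \<sigma>) = inv (mirror k \<circ> \<sigma>)"
      by simp
    then show "inv \<sigma> \<circ> mirror k = \<sigma>"
      using inv_inv_eq[OF \<sigma>] o_inv_distrib[OF bij_mirror \<sigma>] by simp
  next
    assume "inv \<sigma> \<circ> mirror k = \<sigma>"
    then have "inv \<sigma> = \<sigma> \<circ> mirror k"
      using mirror_comp_cancel(2)[of "inv \<sigma>" k] by (simp add: o_assoc)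
    then have "inv (inv \<sigma>) = inv (\<sigma> \<circ> mirror k)"
      by simp
    then show "mirror k \<circ> inv \<sigma> = \<sigma>"
      using inv_inv_eq[OF \<sigma>] o_inv_distrib[OF \<sigma> bij_mirror] by simp
  qed
qed

lemma mirror_conj_inv_eq_iff:
  assumes "\<sigma> permutes {1..k}"
  shows "mirror k \<circ> inv \<sigma> \<circ> mirror k = \<sigma> \<longleftrightarrow> inv (\<sigma> \<circ> mirror k) = \<sigma> \<circ> mirror k"
proof -
  have "inv (\<sigma> \<circ> mirror k) = mirror k \<circ> inv \<sigma>"
    using o_inv_distrib[OF permutes_bij[OF assms] bij_mirror] by simp
  moreover have "mirror k \<circ> inv \<sigma> \<circ> mirror k = \<sigma> \<longleftrightarrow> mirror k \<circ> inv \<sigma> = \<sigma> \<circ> mirror k"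
  proof
    assume "mirror k \<circ> inv \<sigma> \<circ> mirror k = \<sigma>"
    then have "mirror k \<circ> inv \<sigma> \<circ> mirror k \<circ> mirror k = \<sigma> \<circ> mirror k"
      by simp
    then show "mirror k \<circ> inv \<sigma> = \<sigma> \<circ> mirror k"
      by (simp only: mirror_comp_cancel(2))
  qed (simp add: mirror_comp_cancel(2))
  ultimately show ?thesis
    by simp
qed

definition reflect_set :: "nat \<Rightarrow> nat set \<Rightarrow> nat set" where
  "reflect_set k X = (\<lambda>x. k - x) ` X"

lemma reflect_set_subset: "X \<subseteq> {0..k} \<Longrightarrow> reflect_set k X \<subseteq> {0..k}"
  by (auto simp: reflect_set_def)

lemma reflect_set_reflect_set:
  assumes "X \<subseteq> {0..k}"
  shows "reflect_set k (reflect_set k X) = X"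
proof -
  have "reflect_set k (reflect_set k X) = (\<lambda>x. k - (k - x)) ` X"
    by (simp add: reflect_set_def image_image)
  also have "\<dots> = X"
    using assms by (auto intro!: image_cong[where g = id, simplified])
  finally show ?thesis .
qed

lemma reflect_set_lower_half:
  assumes "Y \<subseteq> {0..k div 2}"
  shows "reflect_set k Y \<inter> {0..k div 2} \<subseteq> Y"
proof
  fix z assume "z \<in> reflect_set k Y \<inter> {0..k div 2}"
  then obtain y where "y \<in> Y" "z = k - y" "k - y \<le> k div 2"
    by (auto simp: reflect_set_def)
  moreover have "y \<le> k div 2"
    using assms \<open>y \<in> Y\<close> by auto
  ultimately have "k - y = y"
    by linarith
  then show "z \<in> Y"
    using \<open>y \<in> Y\<close> \<open>z = k - y\<close> by simp
qed

definition symmetric_subsets :: "nat \<Rightarrow> nat set set" where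
  "symmetric_subsets k = {X. X \<subseteq> {0..k} \<and> reflect_set k X = X}"

lemma symmetric_subset_from_lower_half:
  assumes "X \<in> symmetric_subsets k"
  shows "X \<inter> {0..k div 2} \<union> reflect_set k (X \<inter> {0..k div 2}) = X"
proof (intro equalityI subsetI)
  have X: "X \<subseteq> {0..k}" and mem: "\<And>x. x \<in> X \<Longrightarrow> k - x \<in> X"
    using assms by (auto simp: symmetric_subsets_def reflect_set_def)
  fix x assume "x \<in> X"
  show "x \<in> X \<inter> {0..k div 2} \<union> reflect_set k (X \<inter> {0..k div 2})"
  proof (cases "x \<le> k div 2")
    case False
    then have "k - x \<in> X \<inter> {0..k div 2}" "x = k - (k - x)"
      using mem[OF \<open>x \<in> X\<close>] X \<open>x \<in> X\<close> by auto
    then show ?thesis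
      unfolding reflect_set_def by blast
  qed (use \<open>x \<in> X\<close> in simp)
qed (use assms in \<open>auto simp: symmetric_subsets_def reflect_set_def\<close>)

text \<open>A symmetric subset of \<open>{0..k}\<close> is determined by its lower half \<open>{0..k div 2}\<close>.\<close>
lemma card_symmetric_subsets: "card (symmetric_subsets k) = 2 ^ (k div 2 + 1)"
proof -
  let ?L = "{0..k div 2}"
  have "bij_betw (\<lambda>X. X \<inter> ?L) (symmetric_subsets k) (Pow ?L)"
  proof (rule bij_betw_byWitness[where f' = "\<lambda>Y. Y \<union> reflect_set k Y"])
    show "\<forall>X\<in>symmetric_subsets k. X \<inter> ?L \<union> reflect_set k (X \<inter> ?L) = X"
      by (simp add: symmetric_subset_from_lower_half)
    show "\<forall>Y\<in>Pow ?L. (Y \<union> reflect_set k Y) \<inter> ?L = Y"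
    proof
      fix Y assume "Y \<in> Pow ?L"
      then show "(Y \<union> reflect_set k Y) \<inter> ?L = Y"
        using reflect_set_lower_half[of Y k] by auto
    qed
    show "(\<lambda>Y. Y \<union> reflect_set k Y) ` Pow ?L \<subseteq> symmetric_subsets k"
    proof
      fix Z assume "Z \<in> (\<lambda>Y. Y \<union> reflect_set k Y) ` Pow ?L"
      then obtain Y where "Y \<subseteq> ?L" and Z: "Z = Y \<union> reflect_set k Y"
        by blast
      then have Y: "Y \<subseteq> {0..k}" "Z = Y \<union> reflect_set k Y"
        by auto
      then have "reflect_set k Z = reflect_set k Y \<union> Y"
        by (simp add: reflect_set_def image_Un reflect_set_reflect_set[OF Y(1), unfolded reflect_set_def])
      then show "Z \<in> symmetric_subsets k"
        using Y reflect_set_subset[OF Y(1)] by (auto simp: symmetric_subsets_def)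
    qed
  qed auto
  then show ?thesis
    by (simp add: bij_betw_same_card card_Pow)
qed

section \<open>The symmetry group and Burnside's lemma\<close>

text \<open>\<open>(s, a, b)\<close> encodes the symmetry \<open>c\<^sup>b \<circ> r\<^sup>a \<circ> i\<^sup>s\<close>; these eight maps form a dihedral group
  of order 8, since \<open>r\<close> and \<open>c\<close> commute and \<open>i \<circ> c = r \<circ> i\<close>.\<close>

fun sym_act :: "nat \<Rightarrow> bool \<times> bool \<times> bool \<Rightarrow> bvpat \<Rightarrow> bvpat" where
  "sym_act k (s, a, b) (\<sigma>, X, Y) =
     ((if b then mirror k else id) \<circ> (if s then inv \<sigma> else \<sigma>) \<circ> (if a then mirror k else id),
      (if a then reflect_set k else id) (if s then Y else X),
      (if b then reflect_set k else id) (if s then X else Y))"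

fun sym_mult :: "bool \<times> bool \<times> bool \<Rightarrow> bool \<times> bool \<times> bool \<Rightarrow> bool \<times> bool \<times> bool" where
  "sym_mult (s, a, b) (s', a', b') = (s \<noteq> s', a \<noteq> (if s then b' else a'), b \<noteq> (if s then a' else b'))"

definition sym_group :: "(bool \<times> bool \<times> bool) monoid" where
  "sym_group = \<lparr>carrier = UNIV, mult = sym_mult, one = (False, False, False)\<rparr>"

lemma sym_mult_assoc: "sym_mult (sym_mult x y) z = sym_mult x (sym_mult y z)"
  by (cases x; cases y; cases z) auto

lemma sym_mult_inverse: "\<exists>y. sym_mult y x = (False, False, False) \<and> sym_mult x y = (False, False, False)"
proof -
  obtain s a b where "x = (s, a, b)"
    by (cases x) auto
  then show ?thesis
    by (intro exI[of _ "(s, if s then b else a, if s then a else b)"]) auto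
qed

lemma group_sym_group: "group sym_group"
proof (rule groupI)
  fix x assume "x \<in> carrier sym_group"
  show "\<exists>y\<in>carrier sym_group. y \<otimes>\<^bsub>sym_group\<^esub> x = \<one>\<^bsub>sym_group\<^esub>"
    using sym_mult_inverse[of x] by (auto simp: sym_group_def)
qed (auto simp: sym_group_def sym_mult_assoc)

lemma sym_act_in_bvpats:
  assumes "p \<in> bvpats k"
  shows "sym_act k t p \<in> bvpats k"
proof -
  obtain \<sigma> X Y where p: "p = (\<sigma>, X, Y)"
    by (cases p) auto
  obtain s a b where t: "t = (s, a, b)"
    by (cases t) auto
  have "\<sigma> permutes {1..k}" "X \<subseteq> {0..k}" "Y \<subseteq> {0..k}"
    using assms by (auto simp: p bvpats_def)
  moreover have "(if a then mirror k else id) permutes {1..k}" "(if b then mirror k else id) permutes {1..k}"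
    using mirror_permutes[of k] permutes_id[of "{1..k}"] by simp_all
  ultimately show ?thesis
    by (auto simp: p t bvpats_def reflect_set_subset permutes_inv intro!: permutes_compose)
qed

lemma sym_act_one: "sym_act k (False, False, False) p = p"
  by (cases p) simp

lemma sym_act_mult:
  assumes "p \<in> bvpats k"
  shows "sym_act k x (sym_act k y p) = sym_act k (sym_mult x y) p"
proof -
  obtain \<sigma> X Y where p: "p = (\<sigma>, X, Y)"
    by (cases p) auto
  have \<sigma>: "bij \<sigma>" and XY: "X \<subseteq> {0..k}" "Y \<subseteq> {0..k}"
    using assms by (auto simp: p bvpats_def permutes_bij)
  obtain s a b where x: "x = (s, a, b)"
    by (cases x) auto
  obtain s' a' b' where y: "y = (s', a', b')"
    by (cases y) auto
  show ?thesis
    unfolding p x y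
    by (cases s; cases s'; cases a; cases b; cases a'; cases b')
      (simp_all add: o_inv_distrib bij_mirror \<sigma> bij_imp_bij_inv bij_comp inv_inv_eq
        reflect_set_reflect_set XY o_assoc[symmetric], simp_all add: o_assoc)
qed

lemma bij_betw_sym_act: "bij_betw (sym_act k t) (bvpats k) (bvpats k)"
proof -
  obtain t' where t': "sym_mult t' t = (False, False, False)" "sym_mult t t' = (False, False, False)"
    using sym_mult_inverse by blast
  show ?thesis
  proof (rule bij_betw_byWitness[where f' = "sym_act k t'"])
    show "\<forall>p\<in>bvpats k. sym_act k t' (sym_act k t p) = p" "\<forall>p\<in>bvpats k. sym_act k t (sym_act k t' p) = p"
      using t' by (simp_all add: sym_act_mult sym_act_one)
  qed (simp_all add: image_subsetI sym_act_in_bvpats)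
qed

lemma group_action_sym_group:
  "group_action sym_group (bvpats k) (\<lambda>t. restrict (sym_act k t) (bvpats k))"
  unfolding group_action_def group_hom_def group_hom_axioms_def
proof (intro conjI group_sym_group group_BijGroup)
  have Bij: "restrict (sym_act k t) (bvpats k) \<in> Bij (bvpats k)" for t
    using bij_betw_sym_act[of k t] by (simp add: Bij_def)
  have "restrict (sym_act k (sym_mult x y)) (bvpats k)
      = compose (bvpats k) (restrict (sym_act k x) (bvpats k)) (restrict (sym_act k y) (bvpats k))" for x y
    unfolding compose_def by (rule restrict_ext) (simp add: sym_act_mult sym_act_in_bvpats)
  then show "(\<lambda>t. restrict (sym_act k t) (bvpats k)) \<in> hom sym_group (BijGroup (bvpats k))"
    using Bij unfolding hom_def BijGroup_def sym_group_def by (simp del: sym_mult.simps)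
qed

lemma rev_perm_eq: "\<sigma> permutes {1..k} \<Longrightarrow> rev_perm k \<sigma> = \<sigma> \<circ> mirror k"
  by (auto simp: fun_eq_iff rev_perm_def mirror_def permutes_not_in)

lemma comp_perm_eq:
  assumes "\<sigma> permutes {1..k}"
  shows "comp_perm k \<sigma> = mirror k \<circ> \<sigma>"
proof
  fix x
  show "comp_perm k \<sigma> x = (mirror k \<circ> \<sigma>) x"
    using permutes_in_image[OF assms, of x] permutes_not_in[OF assms, of x]
    by (cases "x \<in> {1..k}") (auto simp: comp_perm_def mirror_def)
qed

lemma sym_step_iff_sym_act:
  assumes "p \<in> bvpats k"
  shows "(p, q) \<in> sym_step k \<longleftrightarrow>
    q \<in> {sym_act k (True, False, False) p, sym_act k (False, True, False) p, sym_act k (False, False, True) p}"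
  using assms by (cases p) (auto simp: sym_step_def pat_i_def pat_r_def pat_c_def bvpats_def
      rev_perm_eq comp_perm_eq reflect_set_def)

lemma sym_act_in_sym_class:
  assumes p: "p \<in> bvpats k"
  shows "sym_act k t p \<in> sym_class k p"
proof -
  have step: "(p', sym_act k t' p') \<in> (sym_step k)\<^sup>*"
    if "p' \<in> bvpats k" "t' \<in> {(False, False, False), (True, False, False), (False, True, False), (False, False, True)}"
    for p' t'
  proof (cases "t' = (False, False, False)")
    case False
    then have "(p', sym_act k t' p') \<in> sym_step k"
      using that sym_step_iff_sym_act[OF that(1)] by auto
    then show ?thesis
      by (rule r_into_rtrancl)
  qed (simp add: sym_act_one)
  obtain s a b where t: "t = (s, a, b)"
    by (cases t) auto
  let ?p1 = "sym_act k (s, False, False) p"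
  let ?p2 = "sym_act k (False, a, False) ?p1"
  have p12: "?p1 \<in> bvpats k" "?p2 \<in> bvpats k"
    using p by (simp_all add: sym_act_in_bvpats)
  have "(p, ?p1) \<in> (sym_step k)\<^sup>*" "(?p1, ?p2) \<in> (sym_step k)\<^sup>*"
    "(?p2, sym_act k (False, False, b) ?p2) \<in> (sym_step k)\<^sup>*"
    using step p p12 by (cases s; cases a; cases b; simp)+
  moreover have "sym_act k (False, False, b) ?p2 = sym_act k t p"
    unfolding t using p p12 by (simp add: sym_act_mult del: sym_act.simps)
  ultimately have "(p, sym_act k t p) \<in> (sym_step k)\<^sup>*"
    by (metis rtrancl_trans)
  then show ?thesis
    by (simp add: sym_class_def)
qed

lemma sym_class_eq_sym_act_range:
  assumes p: "p \<in> bvpats k"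
  shows "sym_class k p = range (\<lambda>t. sym_act k t p)"
proof (intro equalityI subsetI)
  fix q assume "q \<in> sym_class k p"
  then have "(p, q) \<in> (sym_step k)\<^sup>*"
    by (simp add: sym_class_def)
  then show "q \<in> range (\<lambda>t. sym_act k t p)"
  proof (induction rule: rtrancl_induct)
    case base
    then show ?case
      using sym_act_one by (metis rangeI)
  next
    case (step q r)
    then obtain t where t: "q = sym_act k t p"
      by blast
    then have "q \<in> bvpats k"
      using sym_act_in_bvpats p by simp
    then obtain t' where "r = sym_act k t' q"
      using step.hyps(2) sym_step_iff_sym_act by blast
    then show ?case
      using t sym_act_mult[OF p] by auto
  qed
next
  fix q assume "q \<in> range (\<lambda>t. sym_act k t p)"
  then show "q \<in> sym_class k p"
    using sym_act_in_sym_class[OF p] by blast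
qed

definition sym_fixed :: "nat \<Rightarrow> bool \<times> bool \<times> bool \<Rightarrow> bvpat set" where
  "sym_fixed k t = {p \<in> bvpats k. sym_act k t p = p}"

lemma num_sym_classes_burnside:
  "num_sym_classes k * 8 = (\<Sum>t\<in>UNIV. card (sym_fixed k t))"
proof -
  interpret group_action sym_group "bvpats k" "\<lambda>t. restrict (sym_act k t) (bvpats k)"
    by (rule group_action_sym_group)
  have "finite (bvpats k)"
    by (rule finite_subset[of _ "{\<sigma>. \<sigma> permutes {1..k}} \<times> Pow {0..k} \<times> Pow {0..k}"])
      (auto simp: bvpats_def finite_permutations)
  then have "card (orbits sym_group (bvpats k) (\<lambda>t. restrict (sym_act k t) (bvpats k))) * order sym_group
      = (\<Sum>t\<in>carrier sym_group. card (invariants (bvpats k) (\<lambda>t. restrict (sym_act k t) (bvpats k)) t))"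
    by (intro burnside) (simp_all add: sym_group_def)
  moreover have "orbits sym_group (bvpats k) (\<lambda>t. restrict (sym_act k t) (bvpats k)) = sym_class k ` bvpats k"
  proof -
    have "orbits sym_group (bvpats k) (\<lambda>t. restrict (sym_act k t) (bvpats k))
        = (\<lambda>p. orbit sym_group (\<lambda>t. restrict (sym_act k t) (bvpats k)) p) ` bvpats k"
      unfolding orbits_def by blast
    also have "\<dots> = sym_class k ` bvpats k"
      by (rule image_cong) (auto simp: orbit_def sym_group_def sym_class_eq_sym_act_range)
    finally show ?thesis .
  qed
  moreover have "order sym_group = 8"
    by (simp add: order_def sym_group_def card_UNIV_bool card_cartesian_product flip: UNIV_Times_UNIV)
  moreover have "invariants (bvpats k) (\<lambda>t. restrict (sym_act k t) (bvpats k)) t = sym_fixed k t" for t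
    by (auto simp: invariants_def sym_fixed_def)
  ultimately show ?thesis
    by (simp add: num_sym_classes_def sym_group_def)
qed

section \<open>Counting fixed points\<close>

lemma card_sym_fixed_identity:
  "card (sym_fixed k (False, False, False)) = fact k * 2 ^ (k + 1) * 2 ^ (k + 1)"
proof -
  have "sym_fixed k (False, False, False) = {\<sigma>. \<sigma> permutes {1..k}} \<times> Pow {0..k} \<times> Pow {0..k}"
    by (auto simp: sym_fixed_def bvpats_def sym_act_one)
  then show ?thesis
    by (simp add: card_cartesian_product card_permutations card_Pow)
qed

lemma sym_fixed_reverse:
  assumes "k \<ge> 2"
  shows "sym_fixed k (False, True, False) = {}"
proof (rule ccontr)
  assume "sym_fixed k (False, True, False) \<noteq> {}"
  then obtain \<sigma> X Y where \<sigma>: "\<sigma> permutes {1..k}" and "\<sigma> \<circ> mirror k = \<sigma>"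
    by (auto simp: sym_fixed_def bvpats_def)
  then have "\<sigma> (mirror k 1) = \<sigma> 1"
    by (metis comp_apply)
  then have "mirror k 1 = 1"
    using permutes_inj[OF \<sigma>] by (simp add: inj_eq)
  then show False
    using assms by (simp add: mirror_def)
qed

lemma sym_fixed_complement:
  assumes "k \<ge> 2"
  shows "sym_fixed k (False, False, True) = {}"
proof (rule ccontr)
  assume "sym_fixed k (False, False, True) \<noteq> {}"
  then obtain \<sigma> X Y where \<sigma>: "\<sigma> permutes {1..k}" and "mirror k \<circ> \<sigma> = \<sigma>"
    by (auto simp: sym_fixed_def bvpats_def)
  then have "mirror k (\<sigma> (inv \<sigma> 1)) = \<sigma> (inv \<sigma> 1)"
    by (metis comp_apply)
  then have "mirror k 1 = 1"
    using permutes_inverses(1)[OF \<sigma>] by simp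
  then show False
    using assms by (simp add: mirror_def)
qed

lemma card_sym_fixed_reverse_complement:
  "card (sym_fixed k (False, True, True))
    = card (perm_centralizer (mirror k) {1..k}) * card (symmetric_subsets k) * card (symmetric_subsets k)"
proof -
  have "sym_fixed k (False, True, True)
      = perm_centralizer (mirror k) {1..k} \<times> symmetric_subsets k \<times> symmetric_subsets k"
  proof (rule Set.set_eqI)
    fix p :: bvpat
    obtain \<sigma> X Y where p: "p = (\<sigma>, X, Y)"
      by (cases p) auto
    show "p \<in> sym_fixed k (False, True, True)
        \<longleftrightarrow> p \<in> perm_centralizer (mirror k) {1..k} \<times> symmetric_subsets k \<times> symmetric_subsets k"
      using mirror_conj_eq_iff[of \<sigma> k]
      by (auto simp: p sym_fixed_def bvpats_def perm_centralizer_def symmetric_subsets_def o_assoc)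
  qed
  then show ?thesis
    by (simp add: card_cartesian_product)
qed

lemma card_sym_fixed_inverse:
  "card (sym_fixed k (True, False, False)) = card (involutions {1..k}) * 2 ^ (k + 1)"
proof -
  have "sym_fixed k (True, False, False) = involutions {1..k} \<times> (\<lambda>X. (X, X)) ` Pow {0..k}"
  proof (rule Set.set_eqI)
    fix p :: bvpat
    obtain \<sigma> X Y where p: "p = (\<sigma>, X, Y)"
      by (cases p) auto
    show "p \<in> sym_fixed k (True, False, False) \<longleftrightarrow> p \<in> involutions {1..k} \<times> (\<lambda>X. (X, X)) ` Pow {0..k}"
      using permutes_inv_eq_self_iff[of \<sigma> "{1..k}"]
      by (auto simp: p sym_fixed_def bvpats_def involutions_def)
  qed
  then show ?thesis
    by (simp add: card_cartesian_product card_diagonal_image card_Pow)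
qed

lemma card_sym_fixed_inverse_reverse:
  "card (sym_fixed k (True, True, False)) = card (perm_square_roots (mirror k) {1..k}) * card (symmetric_subsets k)"
proof -
  have "sym_fixed k (True, True, False) = perm_square_roots (mirror k) {1..k} \<times> (\<lambda>X. (X, X)) ` symmetric_subsets k"
  proof (rule Set.set_eqI)
    fix p :: bvpat
    obtain \<sigma> X Y where p: "p = (\<sigma>, X, Y)"
      by (cases p) auto
    show "p \<in> sym_fixed k (True, True, False)
        \<longleftrightarrow> p \<in> perm_square_roots (mirror k) {1..k} \<times> (\<lambda>X. (X, X)) ` symmetric_subsets k"
      using inv_comp_mirror_eq_iff[of \<sigma> k]
      by (auto simp: p sym_fixed_def bvpats_def perm_square_roots_def symmetric_subsets_def)
  qed
  then show ?thesis
    by (simp add: card_cartesian_product card_diagonal_image)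
qed

lemma card_sym_fixed_inverse_complement:
  "card (sym_fixed k (True, False, True)) = card (perm_square_roots (mirror k) {1..k}) * card (symmetric_subsets k)"
proof -
  have "sym_fixed k (True, False, True) = perm_square_roots (mirror k) {1..k} \<times> (\<lambda>X. (X, X)) ` symmetric_subsets k"
  proof (rule Set.set_eqI)
    fix p :: bvpat
    obtain \<sigma> X Y where p: "p = (\<sigma>, X, Y)"
      by (cases p) auto
    show "p \<in> sym_fixed k (True, False, True)
        \<longleftrightarrow> p \<in> perm_square_roots (mirror k) {1..k} \<times> (\<lambda>X. (X, X)) ` symmetric_subsets k"
      using inv_comp_mirror_eq_iff[of \<sigma> k] mirror_comp_inv_eq_iff[of \<sigma> k]
      by (auto simp: p sym_fixed_def bvpats_def perm_square_roots_def symmetric_subsets_def)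
  qed
  then show ?thesis
    by (simp add: card_cartesian_product card_diagonal_image)
qed

lemma card_sym_fixed_all:
  "card (sym_fixed k (True, True, True)) = card (involutions {1..k}) * 2 ^ (k + 1)"
proof -
  let ?A = "{\<sigma>. \<sigma> permutes {1..k} \<and> inv (\<sigma> \<circ> mirror k) = \<sigma> \<circ> mirror k}"
  have "sym_fixed k (True, True, True) = ?A \<times> (\<lambda>X. (X, reflect_set k X)) ` Pow {0..k}"
  proof (rule Set.set_eqI)
    fix p :: bvpat
    obtain \<sigma> X Y where p: "p = (\<sigma>, X, Y)"
      by (cases p) auto
    show "p \<in> sym_fixed k (True, True, True) \<longleftrightarrow> p \<in> ?A \<times> (\<lambda>X. (X, reflect_set k X)) ` Pow {0..k}"
      using mirror_conj_inv_eq_iff[of \<sigma> k] reflect_set_reflect_set[of X k] reflect_set_reflect_set[of Y k]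
        reflect_set_subset[of X k]
      by (auto simp: p sym_fixed_def bvpats_def)
  qed
  moreover have "bij_betw (\<lambda>\<sigma>. \<sigma> \<circ> mirror k) ?A (involutions {1..k})"
  proof (rule bij_betw_byWitness[where f' = "\<lambda>\<tau>. \<tau> \<circ> mirror k"])
    show "(\<lambda>\<sigma>. \<sigma> \<circ> mirror k) ` ?A \<subseteq> involutions {1..k}"
    proof (rule image_subsetI)
      fix \<sigma> assume "\<sigma> \<in> ?A"
      then have \<tau>: "\<sigma> \<circ> mirror k permutes {1..k}" and "inv (\<sigma> \<circ> mirror k) = \<sigma> \<circ> mirror k"
        using permutes_compose[OF mirror_permutes] by auto
      then show "\<sigma> \<circ> mirror k \<in> involutions {1..k}"
        using permutes_inv_eq_self_iff[OF \<tau>] by (simp add: involutions_def)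
    qed
    show "(\<lambda>\<tau>. \<tau> \<circ> mirror k) ` involutions {1..k} \<subseteq> ?A"
    proof (rule image_subsetI)
      fix \<tau> assume "\<tau> \<in> involutions {1..k}"
      then have \<tau>: "\<tau> permutes {1..k}" and "\<forall>x\<in>{1..k}. \<tau> (\<tau> x) = x"
        by (auto simp: involutions_def)
      then have "inv \<tau> = \<tau>"
        using permutes_inv_eq_self_iff[OF \<tau>] by simp
      then show "\<tau> \<circ> mirror k \<in> ?A"
        using permutes_compose[OF mirror_permutes \<tau>] by (simp add: mirror_comp_cancel)
    qed
  qed (simp_all add: mirror_comp_cancel)
  ultimately show ?thesis
    by (simp add: card_cartesian_product card_diagonal_image card_Pow bij_betw_same_card)
qed

lemma fixed_point_total_eq_times_8:
  fixes A B C D :: nat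
  assumes "k \<ge> 2"
  shows "A * 2 ^ (k + 1) * 2 ^ (k + 1) + 2 ^ (k div 2) * B * 2 ^ (k div 2 + 1) * 2 ^ (k div 2 + 1)
      + 2 * (C * 2 ^ (k + 1)) + 2 * (D * 2 ^ (k div 2 + 1))
    = (2 ^ (2 * k - 1) * A + 2 ^ (3 * (k div 2) - 1) * B + 2 ^ (k - 1) * C + 2 ^ (k div 2 - 1) * D) * 8"
proof -
  obtain k' where k: "k = Suc (Suc k')"
    using assms by (metis add_2_eq_Suc le_Suc_ex)
  have "k div 2 > 0"
    using assms by simp
  then obtain h' where h: "k div 2 = Suc h'"
    using gr0_conv_Suc by blast
  have "2 * k - 1 = k' + k' + 3" "3 * Suc h' - 1 = h' + h' + h' + 2"
    by (simp_all add: k)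
  then show ?thesis
    unfolding h by (simp only: power_add) (simp add: k power_add algebra_simps)
qed

lemma num_sym_classes_eq:
  assumes "k \<ge> 2"
  shows "num_sym_classes k = 2 ^ (2 * k - 1) * fact k + 2 ^ (3 * (k div 2) - 1) * fact (k div 2)
    + 2 ^ (k - 1) * num_involutions k + 2 ^ (k div 2 - 1) * num_square_roots (k div 2)"
proof -
  let ?h = "k div 2"
  have UNIV_eq: "(UNIV :: (bool \<times> bool \<times> bool) set) =
      {(False, False, False), (False, False, True), (False, True, False), (False, True, True),
       (True, False, False), (True, False, True), (True, True, False), (True, True, True)}"
    by auto
  have "num_sym_classes k * 8 = (\<Sum>t\<in>UNIV. card (sym_fixed k t))"
    by (rule num_sym_classes_burnside)
  also have "\<dots> = card (sym_fixed k (False, False, False)) + card (sym_fixed k (False, True, False))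
      + card (sym_fixed k (False, False, True)) + card (sym_fixed k (False, True, True))
      + card (sym_fixed k (True, False, False)) + card (sym_fixed k (True, True, True))
      + card (sym_fixed k (True, True, False)) + card (sym_fixed k (True, False, True))"
    by (simp add: UNIV_eq)
  also have "\<dots> = fact k * 2 ^ (k + 1) * 2 ^ (k + 1) + 2 ^ ?h * fact ?h * 2 ^ (?h + 1) * 2 ^ (?h + 1)
      + 2 * (num_involutions k * 2 ^ (k + 1)) + 2 * (num_square_roots ?h * 2 ^ (?h + 1))"
    unfolding card_sym_fixed_identity sym_fixed_reverse[OF assms] sym_fixed_complement[OF assms]
      card_sym_fixed_reverse_complement card_sym_fixed_inverse card_sym_fixed_inverse_reverse
      card_sym_fixed_inverse_complement card_sym_fixed_all card_perm_centralizer_mirror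
      card_perm_square_roots_mirror card_involutions[OF finite_atLeastAtMost] card_symmetric_subsets
    by simp
  also have "\<dots> = (2 ^ (2 * k - 1) * fact k + 2 ^ (3 * ?h - 1) * fact ?h
      + 2 ^ (k - 1) * num_involutions k + 2 ^ (?h - 1) * num_square_roots ?h) * 8"
    using assms by (rule fixed_point_total_eq_times_8)
  finally show ?thesis
    by simp
qed

lemma num_sym_classes_even_half:
  assumes "m \<ge> 1" "r \<le> 1"
  shows "num_sym_classes (4 * m + r) = 2 ^ (6 * m - 1) * fact (2 * m) + 2 ^ (8 * m + 2 * r - 1) * fact (4 * m + r)
    + 2 ^ (4 * m + r - 1) * num_involutions (4 * m + r) + 2 ^ (2 * m) * (fact (2 * m - 1) div fact (m - 1))"
proof -
  have "4 * m + r \<ge> 2" and eqs: "(4 * m + r) div 2 = 2 * m" "2 * (4 * m + r) - 1 = 8 * m + 2 * r - 1"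
      "3 * (2 * m) - 1 = 6 * m - 1"
    using assms by auto
  then show ?thesis
    using num_sym_classes_eq[OF \<open>4 * m + r \<ge> 2\<close>, unfolded eqs pow2_mult_num_square_roots_even[OF assms(1)]]
    by (simp only: ac_simps)
qed

lemma num_sym_classes_odd_half:
  assumes "r \<le> 1"
  shows "num_sym_classes (4 * m + 2 + r) = 2 ^ (6 * m + 2) * fact (2 * m + 1)
    + 2 ^ (8 * m + 3 + 2 * r) * fact (4 * m + 2 + r) + 2 ^ (4 * m + 1 + r) * num_involutions (4 * m + 2 + r)"
proof -
  have "4 * m + 2 + r \<ge> 2" and eqs: "(4 * m + 2 + r) div 2 = 2 * m + 1"
      "2 * (4 * m + 2 + r) - 1 = 8 * m + 3 + 2 * r" "3 * (2 * m + 1) - 1 = 6 * m + 2"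
      "4 * m + 2 + r - 1 = 4 * m + 1 + r" "2 * m + 1 - 1 = 2 * m"
    using assms by auto
  then show ?thesis
    using num_sym_classes_eq[OF \<open>4 * m + 2 + r \<ge> 2\<close>, unfolded eqs num_square_roots_odd]
    by (simp only: mult_0_right add_0_right ac_simps)
qed

theorem mainTheorem1:
  shows "(\<forall>m::nat. m \<ge> 1 \<longrightarrow> num_sym_classes (4*m) =
            2^(6*m-1) * fact (2*m) + 2^(8*m-1) * fact (4*m) + 2^(4*m-1) * num_involutions (4*m)
            + 2^(2*m) * (fact (2*m-1) div fact (m-1)))
       \<and> (\<forall>m::nat. m \<ge> 1 \<longrightarrow> num_sym_classes (4*m+1) =
            2^(6*m-1) * fact (2*m) + 2^(8*m+1) * fact (4*m+1) + 2^(4*m) * num_involutions (4*m+1)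
            + 2^(2*m) * (fact (2*m-1) div fact (m-1)))
       \<and> (\<forall>m::nat. num_sym_classes (4*m+2) =
            2^(6*m+2) * fact (2*m+1) + 2^(8*m+3) * fact (4*m+2) + 2^(4*m+1) * num_involutions (4*m+2))
       \<and> (\<forall>m::nat. num_sym_classes (4*m+3) =
            2^(6*m+2) * fact (2*m+1) + 2^(8*m+5) * fact (4*m+3) + 2^(4*m+2) * num_involutions (4*m+3))"
proof -
  have arith: "8 * m + 2 * 1 - 1 = 8 * m + 1" "4 * m + 1 - 1 = 4 * m" "4 * m + 2 + 1 = 4 * m + 3"
    "8 * m + 3 + 2 * 1 = 8 * m + 5" "4 * m + 1 + 1 = 4 * m + 2" for m :: nat
    by simp_all
  show ?thesis
    using num_sym_classes_even_half[OF _ le0] num_sym_classes_even_half[OF _ le_refl]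
      num_sym_classes_odd_half[OF le0] num_sym_classes_odd_half[OF le_refl]
    unfolding arith mult_0_right add_0_right by blast
qed

end
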